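(* Let $\mathcal{P}\subset\mathbb{R}^d$ be a finite set of $n$ item vectors, $\bm{q}\in\mathbb{R}^d$, $k>1$ an integer with $k\le n$, $\lambda\in[0,1]$, $\mu>0$, and assume $\langle\bm{x},\bm{y}\rangle\ge0$ for all $\bm{x},\bm{y}\in\mathcal{P}\cup\{\bm{q}\}$. Let $\mathcal{S}^*\in\arg\max_{\mathcal{T}\subseteq\mathcal{P},|\mathcal{T}|=k}f_{avg}(\mathcal{T})$ and let $\mathcal{S}$ be the output of the DualGreedy algorithm run with $f=f_{avg}$. Then $$f_{avg}(\mathcal{S})\ \ge\ \tfrac14 f_{avg}(\mathcal{S}^* )-\tfrac34\,div^*_{max},\qquad div^*_{max}=\max_{\bm{p}_x,\bm{p}_y\in\mathcal{P},\,\bm{p}_x\ne\bm{p}_y}\mu(1-\lambda)\langle\bm{p}_x,\bm{p}_y\rangle.$$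
   Context: For $\mathcal{S}\subseteq\mathcal{P}$, $f_{avg}(\mathcal{S}) = \frac{\lambda}{k}\sum_{\bm{p}\in\mathcal{S}}\langle\bm{p},\bm{q}\rangle - \frac{2\mu(1-\lambda)}{k(k-1)}\sum_{\{\bm{p},\bm{p}'\}\subseteq\mathcal{S},\,\bm{p}\neq\bm{p}'}\langle\bm{p},\bm{p}'\rangle$ (unordered pairs of distinct elements), and the marginal gain is $\Delta_f(\bm{p},\mathcal{S}) = f_{avg}(\mathcal{S}\cup\{\bm{p}\})-f_{avg}(\mathcal{S}) = \frac{\lambda}{k}\langle\bm{p},\bm{q}\rangle - \frac{2\mu(1-\lambda)}{k(k-1)}\sum_{\bm{p}'\in\mathcal{S}}\langle\bm{p},\bm{p}'\rangle$ for $\bm{p}\notin\mathcal{S}$. DualGreedy algorithm: initialize $\mathcal{S}_1=\mathcal{S}_2=\varnothing$. While $|\mathcal{S}_1|<k$ or $|\mathcal{S}_2|<k$: for each $j\in\{1,2\}$ with $|\mathcal{S}_j|<k$, let $\bm{p}_j^*\in\arg\max_{\bm{p}\in\mathcal{P}\setminus(\mathcal{S}_1\cup\mathcal{S}_2)}\Delta_f(\bm{p},\mathcal{S}_j)$ (if $|\mathcal{S}_j|=k$, $\bm{p}_j^*$ is undefined and its gain is treated as $-\infty$); if $\max_{j}\Delta_f(\bm{p}_j^*,\mathcal{S}_j)\le0$, stop; otherwise, if $\Delta_f(\bm{p}_1^*,\mathcal{S}_1)\ge\Delta_f(\bm{p}_2^*,\mathcal{S}_2)$ add $\bm{p}_1^*$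 to $\mathcal{S}_1$, else add $\bm{p}_2^*$ to $\mathcal{S}_2$. Output $\mathcal{S}\in\arg\max_{j\in\{1,2\}}f_{avg}(\mathcal{S}_j)$ (a set of at most $k$ items). *)

theory Defs
  imports "HOL-Analysis.Analysis"
begin

text \<open>Objective f_avg. The sum over unordered pairs of distinct elements of S
  is written as one half of the sum over ordered pairs of distinct elements.\<close>
definition favg :: "real \<Rightarrow> real \<Rightarrow> nat \<Rightarrow> 'a::real_inner \<Rightarrow> 'a set \<Rightarrow> real" where
  "favg lam mu k q S =
     lam / real k * (\<Sum>p\<in>S. inner p q)
     - (2 * mu * (1 - lam)) / (real k * (real k - 1))
         * ((1/2) * (\<Sum>p\<in>S. \<Sum>p'\<in>S - {p}. inner p p'))"

definition gain :: "real \<Rightarrow> real \<Rightarrow> nat \<Rightarrow> 'a::real_inner \<Rightarrow> 'a \<Rightarrow> 'a set \<Rightarrow> real" where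
  "gain lam mu k q p S = favg lam mu k q (insert p S) - favg lam mu k q S"

text \<open>Ties between the two sets go to S1; the chosen element must be an argmax
  of the marginal gain for its set, with positive gain.\<close>
inductive dg_step :: "'a set \<Rightarrow> real \<Rightarrow> real \<Rightarrow> nat \<Rightarrow> 'a::real_inner
     \<Rightarrow> 'a set \<times> 'a set \<Rightarrow> 'a set \<times> 'a set \<Rightarrow> bool"
  for P lam mu k q where
  add1: "\<lbrakk> card S1 < k; p \<in> P - (S1 \<union> S2);
          \<forall>p'\<in>P - (S1 \<union> S2). gain lam mu k q p' S1 \<le> gain lam mu k q p S1;
          gain lam mu k q p S1 > 0;
          card S2 < k \<longrightarrow> (\<forall>p'\<in>P - (S1 \<union> S2). gain lam mu k q p' S2 \<le> gain lam mu k q p S1) \<rbrakk>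
        \<Longrightarrow> dg_step P lam mu k q (S1, S2) (insert p S1, S2)"
| add2: "\<lbrakk> card S2 < k; p \<in> P - (S1 \<union> S2);
          \<forall>p'\<in>P - (S1 \<union> S2). gain lam mu k q p' S2 \<le> gain lam mu k q p S2;
          gain lam mu k q p S2 > 0;
          card S1 < k \<longrightarrow> (\<forall>p'\<in>P - (S1 \<union> S2). gain lam mu k q p' S1 < gain lam mu k q p S2) \<rbrakk>
        \<Longrightarrow> dg_step P lam mu k q (S1, S2) (S1, insert p S2)"

text \<open>Halting: both sets full, or every available best gain (for non-full sets)
  is \<le> 0 (an empty candidate set counts as gain -\<infinity>).\<close>
definition dg_halted :: "'a set \<Rightarrow> real \<Rightarrow> real \<Rightarrow> nat \<Rightarrow> 'a::real_inner \<Rightarrow> 'a set \<Rightarrow> 'a set \<Rightarrow> bool" where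
  "dg_halted P lam mu k q S1 S2 \<longleftrightarrow>
     (card S1 < k \<longrightarrow> (\<forall>p\<in>P - (S1 \<union> S2). gain lam mu k q p S1 \<le> 0)) \<and>
     (card S2 < k \<longrightarrow> (\<forall>p\<in>P - (S1 \<union> S2). gain lam mu k q p S2 \<le> 0))"

text \<open>S is a possible output of DualGreedy (for some admissible tie-breaking).\<close>
definition dual_greedy_output :: "'a set \<Rightarrow> real \<Rightarrow> real \<Rightarrow> nat \<Rightarrow> 'a::real_inner \<Rightarrow> 'a set \<Rightarrow> bool" where
  "dual_greedy_output P lam mu k q S \<longleftrightarrow>
     (\<exists>S1 S2. (dg_step P lam mu k q)\<^sup>*\<^sup>* ({}, {}) (S1, S2) \<and> dg_halted P lam mu k q S1 S2 \<and>
        ((S = S1 \<and> favg lam mu k q S2 \<le> favg lam mu k q S1) \<or>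
         (S = S2 \<and> favg lam mu k q S1 \<le> favg lam mu k q S2)))"

definition div_max :: "'a set \<Rightarrow> real \<Rightarrow> real \<Rightarrow> 'a::real_inner \<Rightarrow> real" where
  "div_max P lam mu q = Max {mu * (1 - lam) * inner px py | px py. px \<in> P \<and> py \<in> P \<and> px \<noteq> py}"

end

theory Submission
  imports Defs
begin

text \<open>Write \<open>rel p = \<lambda>/k \<langle>p, q\<rangle>\<close> and \<open>D\<close> for \<open>div\<^sup>*\<^sub>m\<^sub>a\<^sub>x\<close>. Since all inner
  products are nonnegative, the diversity penalty of a set of at most \<open>k\<close> items lies
  between \<open>0\<close> and \<open>D\<close>, so \<open>f\<^sub>a\<^sub>v\<^sub>g\<close> of such a set is within \<open>D\<close> of its total relevance.
  An item \<open>z\<close> still available to a greedy set \<open>S\<close> of size \<open>s\<close> has marginal gain at least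
  \<open>rel z - 2 s D / (k (k - 1))\<close>, and the greedy choice gained at least as much; summing over
  the run gives \<open>f\<^sub>a\<^sub>v\<^sub>g S \<ge> s rel z - s (s - 1) D / (k (k - 1))\<close>, which at termination
  becomes \<open>k rel z \<le> f\<^sub>a\<^sub>v\<^sub>g S + D\<close>. Splitting any \<open>k\<close>-set \<open>T\<close> into its items in \<open>S\<^sub>1\<close>, in
  \<open>S\<^sub>2\<close> and in neither bounds the relevance of each part by \<open>f\<^sub>a\<^sub>v\<^sub>g S + D\<close> for the output
  \<open>S\<close>, hence \<open>f\<^sub>a\<^sub>v\<^sub>g T \<le> 3 (f\<^sub>a\<^sub>v\<^sub>g S + D)\<close>; the claim follows as \<open>f\<^sub>a\<^sub>v\<^sub>g S \<ge> 0\<close>.\<close>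

definition pair_sum :: "'a::real_inner set \<Rightarrow> real" where
  "pair_sum S = (\<Sum>p\<in>S. \<Sum>p'\<in>S - {p}. inner p p')"

lemma favg_eq_pair_sum:
  "favg lam mu k q S = (\<Sum>p\<in>S. lam / real k * inner p q)
     - mu * (1 - lam) / (real k * (real k - 1)) * pair_sum S"
proof -
  have "2 * mu * (1 - lam) / (real k * (real k - 1)) * (1 / 2 * X)
      = mu * (1 - lam) / (real k * (real k - 1)) * X" for X :: real
    by simp
  moreover have "(\<Sum>p\<in>S. lam / real k * inner p q) = lam / real k * (\<Sum>p\<in>S. inner p q)"
    by (simp add: sum_distrib_left)
  ultimately show ?thesis by (simp add: favg_def pair_sum_def)
qed

lemma pair_sum_insert:
  assumes "finite S" "p \<notin> S"
  shows "pair_sum (insert p S) = pair_sum S + 2 * (\<Sum>y\<in>S. inner p y)"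
proof -
  have "(\<Sum>x\<in>S. \<Sum>y\<in>insert p S - {x}. inner x y)
      = (\<Sum>x\<in>S. inner p x + (\<Sum>y\<in>S - {x}. inner x y))"
  proof (rule sum.cong[OF refl])
    fix x assume "x \<in> S"
    then have "insert p S - {x} = insert p (S - {x})" "p \<notin> S - {x}" using assms by auto
    then show "(\<Sum>y\<in>insert p S - {x}. inner x y) = inner p x + (\<Sum>y\<in>S - {x}. inner x y)"
      using assms by (simp add: inner_commute)
  qed
  moreover have "insert p S - {p} = S" using assms by auto
  ultimately show ?thesis
    using assms by (simp add: pair_sum_def sum.distrib)
qed

lemma gain_eq:
  assumes "finite S" "p \<notin> S"
  shows "gain lam mu k q p S = lam / real k * inner p q
     - mu * (1 - lam) / (real k * (real k - 1)) * (2 * (\<Sum>y\<in>S. inner p y))"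
proof -
  define C where "C = mu * (1 - lam) / (real k * (real k - 1))"
  show ?thesis
    using assms unfolding gain_def favg_eq_pair_sum C_def[symmetric]
    by (simp add: pair_sum_insert algebra_simps)
qed

lemma sum_le_if_card_le:
  fixes h :: "'b \<Rightarrow> real"
  assumes "card A \<le> k" "0 < k" "\<And>x. x \<in> A \<Longrightarrow> real k * h x \<le> B" "0 \<le> B"
  shows "sum h A \<le> B"
proof -
  have "real k * sum h A \<le> real (card A) * B"
    using assms(3) sum_mono[of A "\<lambda>x. real k * h x" "\<lambda>_. B"] by (simp add: sum_distrib_left)
  also have "\<dots> \<le> real k * B"
    using assms(1,4) by (simp add: mult_right_mono)
  finally show ?thesis using assms(2) by simp
qed

locale dual_greedy_instance =
  fixes P :: "'a::real_inner set" and lam mu :: real and k :: nat and q :: 'a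
  assumes finite_P: "finite P" and k_gt_1: "1 < k" and k_le_card_P: "k \<le> card P"
    and lam_nonneg: "0 \<le> lam" and lam_le_1: "lam \<le> 1" and mu_pos: "0 < mu"
    and inner_nonneg: "\<forall>x\<in>insert q P. \<forall>y\<in>insert q P. 0 \<le> inner x y"
begin

abbreviation "f \<equiv> favg lam mu k q"
abbreviation "g \<equiv> gain lam mu k q"
abbreviation "D \<equiv> div_max P lam mu q"
definition relevance :: "'a \<Rightarrow> real" where "relevance p = lam / real k * inner p q"

lemma inner_nonneg_P: "x \<in> P \<Longrightarrow> y \<in> P \<Longrightarrow> 0 \<le> inner x y"
  using inner_nonneg by auto

lemma relevance_nonneg: "p \<in> P \<Longrightarrow> 0 \<le> relevance p"
  using inner_nonneg lam_nonneg by (auto simp: relevance_def)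

lemma pair_count_pos: "0 < real k * (real k - 1)"
  using k_gt_1 by simp

lemma div_max_ge: "x \<in> P \<Longrightarrow> y \<in> P \<Longrightarrow> x \<noteq> y \<Longrightarrow> mu * (1 - lam) * inner x y \<le> D"
proof -
  have "{mu * (1 - lam) * inner x y | x y. x \<in> P \<and> y \<in> P \<and> x \<noteq> y}
        \<subseteq> (\<lambda>(x, y). mu * (1 - lam) * inner x y) ` (P \<times> P)"
    by auto
  then have "finite {mu * (1 - lam) * inner x y | x y. x \<in> P \<and> y \<in> P \<and> x \<noteq> y}"
    by (rule finite_subset) (simp add: finite_P)
  then show "x \<in> P \<Longrightarrow> y \<in> P \<Longrightarrow> x \<noteq> y \<Longrightarrow> ?thesis"
    unfolding div_max_def by (intro Max_ge) auto
qed

lemma div_max_nonneg: "0 \<le> D"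
proof -
  have "\<not> card P \<le> Suc 0" using k_gt_1 k_le_card_P by simp
  then obtain x y where "x \<in> P" "y \<in> P" "x \<noteq> y"
    using card_le_Suc0_iff_eq[OF finite_P] by blast
  then have "mu * (1 - lam) * inner x y \<le> D" by (rule div_max_ge)
  moreover have "0 \<le> mu * (1 - lam) * inner x y"
    using mu_pos lam_le_1 inner_nonneg_P \<open>x \<in> P\<close> \<open>y \<in> P\<close> by simp
  ultimately show ?thesis by simp
qed

lemma pair_sum_nonneg: "S \<subseteq> P \<Longrightarrow> 0 \<le> pair_sum S"
  unfolding pair_sum_def by (intro sum_nonneg) (auto intro!: inner_nonneg_P)

lemma pair_sum_le_div_max:
  assumes "S \<subseteq> P"
  shows "mu * (1 - lam) * pair_sum S \<le> real (card S) * (real (card S) - 1) * D"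
proof -
  have "mu * (1 - lam) * pair_sum S = (\<Sum>p\<in>S. \<Sum>p'\<in>S - {p}. mu * (1 - lam) * inner p p')"
    by (simp add: pair_sum_def sum_distrib_left)
  also have "\<dots> \<le> (\<Sum>p\<in>S. \<Sum>p'\<in>S - {p}. D)"
    using assms by (intro sum_mono div_max_ge) auto
  also have "\<dots> = (\<Sum>p\<in>S. (real (card S) - 1) * D)"
  proof (rule sum.cong[OF refl])
    fix p assume "p \<in> S"
    moreover have "finite S" using assms finite_P finite_subset by blast
    ultimately have "1 \<le> card S" by (auto simp: Suc_le_eq card_gt_0_iff)
    then show "(\<Sum>p'\<in>S - {p}. D) = (real (card S) - 1) * D"
      using \<open>p \<in> S\<close> \<open>finite S\<close> by (simp add: card_Diff_singleton of_nat_diff)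
  qed
  finally show ?thesis by simp
qed

lemma favg_le_sum_relevance: "S \<subseteq> P \<Longrightarrow> f S \<le> (\<Sum>p\<in>S. relevance p)"
  using pair_sum_nonneg[of S] mu_pos lam_le_1 pair_count_pos
  by (simp add: favg_eq_pair_sum relevance_def)

lemma sum_relevance_le_favg:
  assumes "A \<subseteq> S" "S \<subseteq> P" "card S \<le> k"
  shows "(\<Sum>p\<in>A. relevance p) \<le> f S + D"
proof -
  have "real (card S) * (real (card S) - 1) \<le> real k * (real k - 1)"
    using assms(3) pair_count_pos by (cases "card S") (auto intro!: mult_mono)
  then have "mu * (1 - lam) * pair_sum S \<le> real k * (real k - 1) * D"
    using pair_sum_le_div_max[OF assms(2)] div_max_nonneg
    by (meson mult_right_mono order_trans)
  then have "mu * (1 - lam) / (real k * (real k - 1)) * pair_sum S \<le> D"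
    using pair_count_pos by (simp add: divide_le_eq mult.commute)
  moreover have "(\<Sum>p\<in>A. relevance p) \<le> (\<Sum>p\<in>S. relevance p)"
    using assms finite_subset[OF _ finite_P] relevance_nonneg by (intro sum_mono2) auto
  ultimately show ?thesis by (simp add: favg_eq_pair_sum relevance_def)
qed

lemma gain_ge:
  assumes "S \<subseteq> P" "z \<in> P - S"
  shows "relevance z - 2 * real (card S) / (real k * (real k - 1)) * D \<le> g z S"
proof -
  have "mu * (1 - lam) * (\<Sum>y\<in>S. inner z y) = (\<Sum>y\<in>S. mu * (1 - lam) * inner z y)"
    by (simp add: sum_distrib_left)
  also have "\<dots> \<le> (\<Sum>y\<in>S. D)"
    using assms by (intro sum_mono div_max_ge) auto
  finally have "mu * (1 - lam) * (\<Sum>y\<in>S. inner z y) \<le> real (card S) * D"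
    by simp
  then have "mu * (1 - lam) / (real k * (real k - 1)) * (2 * (\<Sum>y\<in>S. inner z y))
      \<le> 2 * real (card S) / (real k * (real k - 1)) * D"
    using pair_count_pos by (simp add: divide_right_mono)
  moreover have "finite S" using assms finite_P finite_subset by blast
  ultimately show ?thesis
    using assms by (simp add: gain_eq relevance_def)
qed

definition greedy_bound :: "'a set \<Rightarrow> 'a \<Rightarrow> bool" where
  "greedy_bound S z \<longleftrightarrow>
     real (card S) * relevance z
       - real (card S) * (real (card S) - 1) / (real k * (real k - 1)) * D \<le> f S"

lemma greedy_bound_empty: "greedy_bound {} z"
  by (simp add: greedy_bound_def favg_def)

lemma greedy_bound_insert:
  assumes "S \<subseteq> P" "z \<in> P - S" "p \<notin> S" "greedy_bound S z" "g z S \<le> g p S"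
  shows "greedy_bound (insert p S) z"
proof -
  define s where "s = real (card S)"
  define N where "N = real k * (real k - 1)"
  have "N \<noteq> 0" unfolding N_def using k_gt_1 by simp
  have "finite S" using assms(1) finite_P finite_subset by blast
  then have card_insert: "real (card (insert p S)) = s + 1" using assms(3) s_def by simp
  have "(s + 1) * relevance z - (s + 1) * (s + 1 - 1) / N * D
     = (s * relevance z - s * (s - 1) / N * D) + (relevance z - 2 * s / N * D)"
    using \<open>N \<noteq> 0\<close> by (simp add: field_simps)
  also have "\<dots> \<le> f S + g p S"
    using assms(4) gain_ge[OF assms(1,2)] assms(5) unfolding greedy_bound_def s_def N_def
    by linarith
  also have "\<dots> = f (insert p S)" by (simp add: gain_def)
  finally show ?thesis unfolding greedy_bound_def card_insert N_def .
qed

lemma greedy_bound_halted: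
  assumes "S \<subseteq> P" "z \<in> P - S" "greedy_bound S z" "card S \<le> k"
    and "card S < k \<longrightarrow> g z S \<le> 0"
  shows "real k * relevance z \<le> f S + D"
proof (cases "card S = k")
  case True
  have "real k * (real k - 1) / (real k * (real k - 1)) * D = D"
    using k_gt_1 by simp
  then show ?thesis using assms(3) unfolding greedy_bound_def True by linarith
next
  case False
  define s where "s = real (card S)"
  define N where "N = real k * (real k - 1)"
  have N_pos: "0 < N" using pair_count_pos N_def by simp
  have "s + 1 \<le> real k" using False assms(4) s_def by simp
  have "relevance z - 2 * s / N * D \<le> 0"
    using gain_ge[OF assms(1,2)] assms(5) False assms(4) unfolding s_def N_def by simp
  then have "relevance z * N \<le> 2 * s * D" using N_pos by (simp add: field_simps)
  then have "(real k - s) * (relevance z * N) \<le> (real k - s) * (2 * s * D)"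
    using \<open>s + 1 \<le> real k\<close> by (intro mult_left_mono) auto
  moreover have "0 \<le> (real k - s) * (real k - s - 1) * D"
    using \<open>s + 1 \<le> real k\<close> div_max_nonneg by simp
  moreover have "(real k * relevance z - D) * N
      = (s * relevance z * N - s * (s - 1) * D)
        + ((real k - s) * (relevance z * N) - (real k - s) * (2 * s * D))
        - (real k - s) * (real k - s - 1) * D"
    by (simp add: N_def algebra_simps)
  moreover have "(s * relevance z - s * (s - 1) / N * D) * N
      = s * relevance z * N - s * (s - 1) * D"
    using N_pos by (simp add: field_simps)
  ultimately have "(real k * relevance z - D) * N \<le> (s * relevance z - s * (s - 1) / N * D) * N"
    by linarith
  then have "real k * relevance z - D \<le> s * relevance z - s * (s - 1) / N * D"
    using N_pos by simp
  also have "\<dots> \<le> f S" using assms(3) unfolding greedy_bound_def s_def N_def .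
  finally show ?thesis by simp
qed

definition greedy_inv :: "'a set \<Rightarrow> 'a set \<Rightarrow> bool" where
  "greedy_inv other S \<longleftrightarrow> S \<subseteq> P \<and> card S \<le> k \<and> 0 \<le> f S
     \<and> (\<forall>z\<in>P - (S \<union> other). greedy_bound S z)"

lemma greedy_inv_empty: "greedy_inv other {}"
  by (simp add: greedy_inv_def greedy_bound_empty favg_def)

lemma greedy_inv_mono: "greedy_inv other S \<Longrightarrow> other \<subseteq> other' \<Longrightarrow> greedy_inv other' S"
  by (auto simp: greedy_inv_def)

lemma greedy_inv_insert:
  assumes "greedy_inv other S" "card S < k" "p \<in> P - (S \<union> other)"
    and "\<forall>z\<in>P - (S \<union> other). g z S \<le> g p S" "0 < g p S"
  shows "greedy_inv other (insert p S)"
proof -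
  have "S \<subseteq> P" "0 \<le> f S" and bound: "\<forall>z\<in>P - (S \<union> other). greedy_bound S z"
    using assms(1) by (auto simp: greedy_inv_def)
  have "finite S" using \<open>S \<subseteq> P\<close> finite_P finite_subset by blast
  then have "card (insert p S) \<le> k" using assms(2) by (simp add: card_insert_if)
  moreover have "0 \<le> f (insert p S)"
    using \<open>0 \<le> f S\<close> assms(5) by (simp add: gain_def)
  moreover have "greedy_bound (insert p S) z" if "z \<in> P - (insert p S \<union> other)" for z
    using that assms(3,4) bound greedy_bound_insert[OF \<open>S \<subseteq> P\<close>] by auto
  ultimately show ?thesis
    using \<open>S \<subseteq> P\<close> assms(3) by (simp add: greedy_inv_def)
qed

lemma greedy_inv_step:
  assumes "dg_step P lam mu k q (S1, S2) (S1', S2')" "greedy_inv S2 S1" "greedy_inv S1 S2"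
  shows "greedy_inv S2' S1' \<and> greedy_inv S1' S2'"
  using assms(1)
proof cases
  case (add1 p)
  then show ?thesis
    using assms(2,3) greedy_inv_insert[of S2 S1 p] greedy_inv_mono[of S1 S2 "insert p S1"]
    by auto
next
  case (add2 p)
  then show ?thesis
    using assms(2,3) greedy_inv_insert[of S1 S2 p] greedy_inv_mono[of S2 S1 "insert p S2"]
    by (auto simp: Un_commute)
qed

lemma greedy_inv_reachable:
  assumes "(dg_step P lam mu k q)\<^sup>*\<^sup>* ({}, {}) (S1, S2)"
  shows "greedy_inv S2 S1 \<and> greedy_inv S1 S2"
  using assms
proof (induction rule: rtranclp_induct2)
  case refl
  then show ?case by (simp add: greedy_inv_empty)
next
  case (step S1 S2 S1' S2')
  then show ?case using greedy_inv_step by blast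
qed

lemma sum_relevance_unchosen_le:
  assumes "greedy_inv other S" "card S < k \<longrightarrow> (\<forall>p\<in>P - (S \<union> other). g p S \<le> 0)"
    and "A \<subseteq> P - (S \<union> other)" "card A \<le> k"
  shows "(\<Sum>p\<in>A. relevance p) \<le> f S + D"
proof (rule sum_le_if_card_le[OF assms(4)])
  show "0 < k" using k_gt_1 by simp
  show "0 \<le> f S + D" using assms(1) div_max_nonneg by (simp add: greedy_inv_def)
  fix z assume "z \<in> A"
  then show "real k * relevance z \<le> f S + D"
    using assms(1-3) by (intro greedy_bound_halted) (auto simp: greedy_inv_def)
qed

lemma favg_le_dual_greedy_output:
  assumes "dual_greedy_output P lam mu k q S" "T \<subseteq> P" "card T \<le> k"
  shows "0 \<le> f S" "f T \<le> 3 * (f S + D)"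
proof -
  obtain S1 S2 where run: "(dg_step P lam mu k q)\<^sup>*\<^sup>* ({}, {}) (S1, S2)"
    and halted: "dg_halted P lam mu k q S1 S2"
    and chosen: "(S = S1 \<and> f S2 \<le> f S1) \<or> (S = S2 \<and> f S1 \<le> f S2)"
    using assms(1) unfolding dual_greedy_output_def by blast
  have inv1: "greedy_inv S2 S1" and inv2: "greedy_inv S1 S2"
    using greedy_inv_reachable[OF run] by auto
  have "f S1 \<le> f S" "f S2 \<le> f S" using chosen by auto
  moreover have "0 \<le> f S1" using inv1 by (simp add: greedy_inv_def)
  ultimately show "0 \<le> f S" by linarith
  have "finite T" using assms(2) finite_P finite_subset by blast
  have "(\<Sum>p\<in>T. relevance p) = (\<Sum>p\<in>T \<inter> S1. relevance p)
      + (\<Sum>p\<in>(T - S1) \<inter> S2. relevance p) + (\<Sum>p\<in>T - S1 - S2. relevance p)"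
    using \<open>finite T\<close> by (simp add: sum.Int_Diff[of T _ S1] sum.Int_Diff[of "T - S1" _ S2])
  also have "\<dots> \<le> (f S1 + D) + (f S2 + D) + (f S1 + D)"
  proof (intro add_mono)
    show "(\<Sum>p\<in>T \<inter> S1. relevance p) \<le> f S1 + D"
      using inv1 by (intro sum_relevance_le_favg) (auto simp: greedy_inv_def)
    show "(\<Sum>p\<in>(T - S1) \<inter> S2. relevance p) \<le> f S2 + D"
      using inv2 by (intro sum_relevance_le_favg) (auto simp: greedy_inv_def)
    have "card (T - S1 - S2) \<le> card T" using \<open>finite T\<close> by (rule card_mono) auto
    then have "card (T - S1 - S2) \<le> k" using assms(3) by (rule le_trans)
    then show "(\<Sum>p\<in>T - S1 - S2. relevance p) \<le> f S1 + D"
      using inv1 halted assms(2) unfolding dg_halted_def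
      by (intro sum_relevance_unchosen_le) auto
  qed
  also have "\<dots> \<le> 3 * (f S + D)"
    using \<open>f S1 \<le> f S\<close> \<open>f S2 \<le> f S\<close> by argo
  finally show "f T \<le> 3 * (f S + D)"
    using favg_le_sum_relevance[OF assms(2)] by linarith
qed

end

theorem theorem2:
  fixes P :: "'a::euclidean_space set" and q :: 'a
    and k :: nat and lam mu :: real and S Sstar :: "'a set"
  assumes "finite P"
    and "1 < k" and "k \<le> card P"
    and "0 \<le> lam" and "lam \<le> 1" and "0 < mu"
    and "\<forall>x\<in>insert q P. \<forall>y\<in>insert q P. 0 \<le> inner x y"
    and "Sstar \<subseteq> P" and "card Sstar = k"
    and "\<forall>T. T \<subseteq> P \<and> card T = k \<longrightarrow> favg lam mu k q T \<le> favg lam mu k q Sstar"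
    and "dual_greedy_output P lam mu k q S"
  shows "favg lam mu k q S \<ge> 1/4 * favg lam mu k q Sstar - 3/4 * div_max P lam mu q"
proof -
  interpret dual_greedy_instance P lam mu k q
    using assms(1-7) by unfold_locales
  have "0 \<le> f S" "f Sstar \<le> 3 * (f S + D)"
    using favg_le_dual_greedy_output[OF assms(11,8)] assms(9) by auto
  then show ?thesis using div_max_nonneg by argo
qed

end
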